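(* Let $\beta,\gamma\ge0$ with $\beta+\gamma>0$. Let $\mu_{\beta,\gamma}$ be the unique strictly increasing continuous function on $[0,T]$, continuously differentiable on $(0,T]$, with $\mu_{\beta,\gamma}(0)=0$ and $\mu'_{\beta,\gamma}(s)=\frac{\gamma^2}{2\mu_{\beta,\gamma}(s)}+\frac{\sqrt2}{2}\beta$ for $s\in(0,T]$; let $\nu_{\beta,\gamma}(s):=\int_0^s\big[\frac{\sqrt2}{2}\beta\mu_{\beta,\gamma}(r)+\frac{\gamma^2}{2}\big(1+\frac{\sqrt2}{\mu_{\beta,\gamma}(r)}\big)\big]dr$; let $\varphi(s,x):=(x+e)\exp\big(\mu_{\beta,\gamma}(s)\sqrt{2\ln(x+e)}+\nu_{\beta,\gamma}(s)\big)$ and $\psi(x,\mu):=x\exp(\mu\sqrt{2\ln(1+x)})$. Then there exists a constant $K>0$ depending only on $(\beta,\gamma,T)$ such that for all $(s,x)\in[0,T]\times\mathbb R_+$, $$\psi(x,\mu_{\beta,\gamma}(s))\le\varphi(s,x)\le K\psi(x,\mu_{\beta,\gamma}(s))+K.$$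
   Context: $T>0$ is fixed. *)

theory Defs
  imports "HOL-Analysis.Analysis"
begin

definition is_mu :: "real \<Rightarrow> real \<Rightarrow> real \<Rightarrow> (real \<Rightarrow> real) \<Rightarrow> bool" where
  "is_mu \<beta> \<gamma> T \<mu> \<longleftrightarrow>
     continuous_on {0..T} \<mu> \<and>
     strict_mono_on {0..T} \<mu> \<and>
     \<mu> 0 = 0 \<and>
     (\<forall>s\<in>{0<..T}. (\<mu> has_real_derivative
          (\<gamma>^2 / (2 * \<mu> s) + sqrt 2 / 2 * \<beta>)) (at s within {0..T})) \<and>
     continuous_on {0<..T} (\<lambda>s. \<gamma>^2 / (2 * \<mu> s) + sqrt 2 / 2 * \<beta>)"

definition nu_fun :: "real \<Rightarrow> real \<Rightarrow> (real \<Rightarrow> real) \<Rightarrow> real \<Rightarrow> real" where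
  "nu_fun \<beta> \<gamma> \<mu> s =
     integral {0..s} (\<lambda>r. sqrt 2 / 2 * \<beta> * \<mu> r + \<gamma>^2 / 2 * (1 + sqrt 2 / \<mu> r))"

definition phi_fun :: "real \<Rightarrow> real \<Rightarrow> (real \<Rightarrow> real) \<Rightarrow> real \<Rightarrow> real \<Rightarrow> real" where
  "phi_fun \<beta> \<gamma> \<mu> s x =
     (x + exp 1) * exp (\<mu> s * sqrt (2 * ln (x + exp 1)) + nu_fun \<beta> \<gamma> \<mu> s)"

definition psi_fun :: "real \<Rightarrow> real \<Rightarrow> real" where
  "psi_fun x m = x * exp (m * sqrt (2 * ln (1 + x)))"

end

theory Submission
  imports Defs
begin

text \<open>
  Only crude information on \<open>\<mu>\<close> and \<open>\<nu>\<close> is needed: on \<open>[0,T]\<close> both are nonnegative and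
  bounded, by \<open>\<mu> T\<close> and \<open>max 0 (\<nu> T)\<close>. The comparison is then pointwise in \<open>x\<close>: replacing
  \<open>1 + x\<close> by \<open>x + e\<close> raises \<open>ln\<close> by at most \<open>1\<close> and hence \<open>sqrt (2 ln)\<close> by at most
  \<open>sqrt 2 < 2\<close>, which costs the factor \<open>exp (2 \<mu> T)\<close>; the additive \<open>e\<close> in \<open>x + e\<close> is
  absorbed into \<open>x\<close> for \<open>x > 1\<close> and into the constant for \<open>x \<le> 1\<close>.
\<close>

lemma integral_nonneg_unconditional:
  fixes f :: "real \<Rightarrow> real"
  assumes "\<And>r. r \<in> S \<Longrightarrow> 0 \<le> f r"
  shows "0 \<le> integral S f"
  using assms integral_nonneg not_integrable_integral by (metis order_refl)

lemma integral_initial_segment_le: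
  fixes f :: "real \<Rightarrow> real"
  assumes nonneg: "\<And>r. r \<in> {a..b} \<Longrightarrow> 0 \<le> f r"
    and cont: "continuous_on {a<..b} f"
    and s: "s \<in> {a..b}"
  shows "integral {a..s} f \<le> max 0 (integral {a..b} f)"
proof (cases "f integrable_on {a..b}")
  case True
  then have "integral {a..s} f \<le> integral {a..b} f"
    using s nonneg by (intro integral_subset_le integrable_on_subinterval[OF True]) auto
  then show ?thesis by simp
next
  case False
  \<comment> \<open>Non-integrability can only come from the endpoint \<open>a\<close>, so it persists on
    every \<open>[a,s]\<close> with \<open>s > a\<close>, where the integral is then the junk value \<open>0\<close>.\<close>
  show ?thesis
  proof (cases "s = a")
    case True
    then show ?thesis by simp
  next
    case False
    with s have "{s..b} \<subseteq> {a<..b}" by auto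
    then have "f integrable_on {s..b}"
      by (intro integrable_continuous_real continuous_on_subset[OF cont])
    then have "\<not> f integrable_on {a..s}"
      using \<open>\<not> f integrable_on {a..b}\<close> s
        Henstock_Kurzweil_Integration.integrable_combine[of a s b f] by auto
    then show ?thesis by (simp add: not_integrable_integral)
  qed
qed

lemma is_mu_continuous_on: "is_mu \<beta> \<gamma> T \<mu> \<Longrightarrow> continuous_on {0..T} \<mu>"
  and is_mu_strict_mono_on: "is_mu \<beta> \<gamma> T \<mu> \<Longrightarrow> strict_mono_on {0..T} \<mu>"
  and is_mu_zero: "is_mu \<beta> \<gamma> T \<mu> \<Longrightarrow> \<mu> 0 = 0"
  by (simp_all add: is_mu_def)

lemma is_mu_pos:
  assumes "is_mu \<beta> \<gamma> T \<mu>" and "s \<in> {0<..T}"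
  shows "0 < \<mu> s"
  using strict_mono_onD[OF is_mu_strict_mono_on[OF assms(1)], of 0 s] is_mu_zero[OF assms(1)] assms(2)
  by simp

lemma is_mu_nonneg:
  assumes "is_mu \<beta> \<gamma> T \<mu>" and "s \<in> {0..T}"
  shows "0 \<le> \<mu> s"
  using is_mu_pos[OF assms(1), of s] is_mu_zero[OF assms(1)] assms(2)
  by (cases "s = 0") auto

lemma is_mu_le_endpoint:
  assumes "is_mu \<beta> \<gamma> T \<mu>" and "s \<in> {0..T}"
  shows "\<mu> s \<le> \<mu> T"
  using mono_onD[OF strict_mono_on_imp_mono_on[OF is_mu_strict_mono_on[OF assms(1)]], of s T] assms(2)
  by simp

lemma nu_fun_bounds:
  assumes mu: "is_mu \<beta> \<gamma> T \<mu>" and "\<beta> \<ge> 0" and s: "s \<in> {0..T}"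
  shows "0 \<le> nu_fun \<beta> \<gamma> \<mu> s" and "nu_fun \<beta> \<gamma> \<mu> s \<le> max 0 (nu_fun \<beta> \<gamma> \<mu> T)"
proof -
  define f where "f r = sqrt 2 / 2 * \<beta> * \<mu> r + \<gamma>^2 / 2 * (1 + sqrt 2 / \<mu> r)" for r
  have nu: "nu_fun \<beta> \<gamma> \<mu> t = integral {0..t} f" for t
    unfolding nu_fun_def f_def ..
  have nonneg: "0 \<le> f r" if "r \<in> {0..T}" for r
    using is_mu_nonneg[OF mu that] \<open>\<beta> \<ge> 0\<close> unfolding f_def by simp
  have "continuous_on {0<..T} \<mu>"
    using is_mu_continuous_on[OF mu] by (rule continuous_on_subset) auto
  then have "continuous_on {0<..T} f"
    unfolding f_def using is_mu_pos[OF mu] by (intro continuous_intros) force+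
  then show "nu_fun \<beta> \<gamma> \<mu> s \<le> max 0 (nu_fun \<beta> \<gamma> \<mu> T)"
    unfolding nu using nonneg s by (intro integral_initial_segment_le)
  show "0 \<le> nu_fun \<beta> \<gamma> \<mu> s"
    unfolding nu using nonneg s by (intro integral_nonneg_unconditional) auto
qed

lemma sqrt_two_ln_add_e_le:
  fixes x :: real
  assumes "0 \<le> x"
  shows "sqrt (2 * ln (x + exp 1)) \<le> 2 + sqrt (2 * ln (1 + x))"
proof -
  have "x * 1 \<le> x * exp 1"
    using assms by (intro mult_left_mono) auto
  then have "x + exp 1 \<le> exp 1 * (1 + x)"
    by (simp add: algebra_simps)
  then have "ln (x + exp 1) \<le> ln (exp 1 * (1 + x))"
    using assms by (subst ln_le_cancel_iff) (auto intro: add_nonneg_pos)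
  then have "ln (x + exp 1) \<le> 1 + ln (1 + x)"
    using assms by (simp add: ln_mult)
  then have "sqrt (2 * ln (x + exp 1)) \<le> sqrt (2 + 2 * ln (1 + x))" by simp
  also have "\<dots> \<le> sqrt 2 + sqrt (2 * ln (1 + x))"
    using assms by (intro sqrt_add_le_add_sqrt) auto
  also have "\<dots> \<le> 2 + sqrt (2 * ln (1 + x))"
    using sqrt2_less_2 by simp
  finally show ?thesis .
qed

lemma exp_sqrt_two_ln_le:
  fixes x m M :: real
  assumes "0 \<le> x" and "0 \<le> m" "m \<le> M"
  shows "exp (m * sqrt (2 * ln (1 + x))) \<le> x * exp (m * sqrt (2 * ln (1 + x))) + exp (2 * M)"
proof (cases "x \<le> 1")
  case True
  then have "ln (1 + x) \<le> 1" using ln_le_minus_one[of "1 + x"] assms(1) by simp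
  then have "sqrt (2 * ln (1 + x)) \<le> sqrt 2" by simp
  then have "sqrt (2 * ln (1 + x)) \<le> 2" using sqrt2_less_2 by linarith
  then have "m * sqrt (2 * ln (1 + x)) \<le> M * 2" using assms by (intro mult_mono) auto
  then show ?thesis using assms(1) by (simp add: add_increasing mult.commute)
next
  case False
  then show ?thesis by (simp add: add_increasing2)
qed

lemma psi_fun_le_phi_form:
  fixes x m n :: real
  assumes "0 \<le> x" and "0 \<le> m" and "0 \<le> n"
  shows "psi_fun x m \<le> (x + exp 1) * exp (m * sqrt (2 * ln (x + exp 1)) + n)"
proof -
  have "ln (1 + x) \<le> ln (x + exp 1)"
    using assms(1) by (subst ln_le_cancel_iff) (auto intro: add_nonneg_pos)
  then have "m * sqrt (2 * ln (1 + x)) \<le> m * sqrt (2 * ln (x + exp 1)) + n"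
    using assms by (simp add: mult_left_mono add_increasing2)
  then show ?thesis
    unfolding psi_fun_def using assms(1) by (intro mult_mono) auto
qed

lemma phi_form_le_psi_fun:
  fixes x m n M N :: real
  assumes x: "0 \<le> x" and m: "0 \<le> m" "m \<le> M" and n: "n \<le> N"
  defines "K \<equiv> exp (2 * M + N) * (1 + exp 1) * (1 + exp (2 * M))"
  shows "(x + exp 1) * exp (m * sqrt (2 * ln (x + exp 1)) + n) \<le> K * psi_fun x m + K"
proof -
  define E where "E = exp (m * sqrt (2 * ln (1 + x)))"
  define C where "C = exp (2 * M + N)"
  have xE: "0 \<le> x * E" using x unfolding E_def by simp
  have "m * sqrt (2 * ln (x + exp 1)) + n \<le> (2 * M + N) + m * sqrt (2 * ln (1 + x))"
    using mult_left_mono[OF sqrt_two_ln_add_e_le[OF x] m(1)] m n by (simp add: algebra_simps)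
  then have "exp (m * sqrt (2 * ln (x + exp 1)) + n) \<le> C * E"
    unfolding C_def E_def by (simp flip: exp_add)
  then have "(x + exp 1) * exp (m * sqrt (2 * ln (x + exp 1)) + n) \<le> (x + exp 1) * (C * E)"
    using x by (intro mult_left_mono) (auto intro: add_nonneg_pos)
  also have "\<dots> = C * (x * E + exp 1 * E)"
    by (simp add: algebra_simps)
  also have "\<dots> \<le> C * (x * E + exp 1 * (x * E + exp (2 * M)))"
    using exp_sqrt_two_ln_le[OF x m, folded E_def] unfolding C_def by simp
  also have "\<dots> = C * (1 + exp 1) * (x * E) + C * (exp 1 * exp (2 * M))"
    by (simp add: algebra_simps)
  also have "\<dots> \<le> K * (x * E) + K"
  proof (rule add_mono)
    have "C * (1 + exp 1) \<le> K"
      unfolding K_def C_def by (simp add: add_pos_pos)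
    then show "C * (1 + exp 1) * (x * E) \<le> K * (x * E)"
      using xE by (rule mult_right_mono)
    have "exp 1 * exp (2 * M) \<le> (1 + exp 1) * (1 + exp (2 * M))"
      by (intro mult_mono) auto
    then show "C * (exp 1 * exp (2 * M)) \<le> K"
      unfolding K_def C_def by (simp add: mult.assoc)
  qed
  finally show ?thesis unfolding psi_fun_def E_def .
qed

theorem proposition3p4:
  fixes \<beta> \<gamma> T :: real and \<mu> :: "real \<Rightarrow> real"
  assumes "T > 0" and "\<beta> \<ge> 0" and "\<gamma> \<ge> 0" and "\<beta> + \<gamma> > 0"
    and "is_mu \<beta> \<gamma> T \<mu>"
  shows "\<exists>K>0. \<forall>s\<in>{0..T}. \<forall>x\<ge>0.
           psi_fun x (\<mu> s) \<le> phi_fun \<beta> \<gamma> \<mu> s x \<and>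
           phi_fun \<beta> \<gamma> \<mu> s x \<le> K * psi_fun x (\<mu> s) + K"
proof -
  note mu = \<open>is_mu \<beta> \<gamma> T \<mu>\<close> and \<beta> = \<open>\<beta> \<ge> 0\<close>
  define M where "M = \<mu> T"
  define N where "N = max 0 (nu_fun \<beta> \<gamma> \<mu> T)"
  define K where "K = exp (2 * M + N) * (1 + exp 1) * (1 + exp (2 * M))"
  have "K > 0" unfolding K_def by (simp add: add_pos_pos)
  moreover have "psi_fun x (\<mu> s) \<le> phi_fun \<beta> \<gamma> \<mu> s x \<and>
      phi_fun \<beta> \<gamma> \<mu> s x \<le> K * psi_fun x (\<mu> s) + K"
    if s: "s \<in> {0..T}" and x: "0 \<le> x" for s x
    using psi_fun_le_phi_form[OF x is_mu_nonneg[OF mu s] nu_fun_bounds(1)[OF mu \<beta> s]]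
      phi_form_le_psi_fun[OF x is_mu_nonneg[OF mu s] is_mu_le_endpoint[OF mu s]
        nu_fun_bounds(2)[OF mu \<beta> s]]
    unfolding phi_fun_def K_def M_def N_def by simp
  ultimately show ?thesis by blast
qed

end
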